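(* For $n\ge 6$ consider partitions of $n$ with parts $q_1\ge q_2\ge\dots\ge q_h$ such that $h\ge 3$, $q_j-q_{j+1}\in\{0,1\}$ for all $1\le j<h$, $q_1=q_2$, and $q_{h-1}=q_h=3$. Let $e''(n)$ (resp. $o''(n)$) be the number of such partitions with an even (resp. odd) number $h$ of parts. For an integer $t$ put $P_1(t)=\tfrac12(3t^2+t+4)$, $P_2(t)=\tfrac12(3(t+1)^2-t-1)$, $P_3(t)=\tfrac12(3(t+1)^2-t+3)$, $P_4(t)=\tfrac12(3(t+1)^2+t+1)$. Then for every integer $n\ge 6$: (a) $e''(n)=o''(n)$ if $n\notin\{P_1(t),P_2(t),P_3(t),P_4(t)\}$ for every integer $t\ge 2$; (b) $e''(n)=o''(n)-1$ if $n=P_1(t)$ or $n=P_4(t)$ for some integer $t\ge 2$; (c) $e''(n)=o''(n)+1$ if $n=P_2(t)$ or $n=P_3(t)$ for some integer $t\ge 2$. *)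

theory Defs
  imports Main
begin

definition restr_part :: "nat \<Rightarrow> nat list \<Rightarrow> bool" where
  "restr_part n q \<longleftrightarrow>
     sum_list q = n \<and> (\<forall>x\<in>set q. 0 < x) \<and> sorted_wrt (\<ge>) q \<and>
     length q \<ge> 3 \<and>
     (\<forall>j. j + 1 < length q \<longrightarrow> q ! j - q ! (j + 1) \<in> {0, 1}) \<and>
     q ! 0 = q ! 1 \<and>
     q ! (length q - 2) = 3 \<and> q ! (length q - 1) = 3"

definition e2 :: "nat \<Rightarrow> nat" where
  "e2 n = card {q. restr_part n q \<and> even (length q)}"

definition o2 :: "nat \<Rightarrow> nat" where
  "o2 n = card {q. restr_part n q \<and> odd (length q)}"

definition P1 :: "int \<Rightarrow> int" where "P1 t = (3 * t^2 + t + 4) div 2"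
definition P2 :: "int \<Rightarrow> int" where "P2 t = (3 * (t+1)^2 - t - 1) div 2"
definition P3 :: "int \<Rightarrow> int" where "P3 t = (3 * (t+1)^2 - t + 3) div 2"
definition P4 :: "int \<Rightarrow> int" where "P4 t = (3 * (t+1)^2 + t + 1) div 2"

end

theory Submission
  imports Defs "HOL-Computational_Algebra.Formal_Power_Series"
begin

text \<open>
  Index the parts from 0. A restricted partition q_0 >= ... >= q_(h-1) is determined by the set S
  of indices s with q_(s-1) > q_s: then q_i = 3 + #{s in S. i < s}, the conditions q_0 = q_1 and
  q_(h-2) = q_(h-1) = 3 say exactly that S is a subset of {2..h-2}, and the weight is 3h + sum S.
  Hence
    sum_n (e''(n) - o''(n)) x^n = sum_(h >= 3) (-1)^h x^(3h) prod_(k = 2..h-2) (1 + x^k).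
  With a_0 = 5 and a_(i+1) = a_i + 3i + 7 put
    T_i = sum_j (-1)^j x^(a_i + (i+2) j) (1 + x^2) prod_(k = i+2..i+1+j) (1 + x^k),
  so that the series above is T_1 - x^9. Expanding the factor 1 + x^(i+2) in every term of T_i,
  the pieces of consecutive terms combine and leave
    T_i = (1 + x^2) (x^(a_i) - x^(a_i + i + 2)) + T_(i+1).
  As a_(i+1) > a_i + i + 4, the exponents a_i, a_i + 2, a_i + i + 2, a_i + i + 4 of the successive
  heads never collide; they are P2(i+1), P3(i+1), P4(i+1), P1(i+2), with signs + + - -, and the
  remaining -x^9 accounts for P1(2) = 9.
\<close>

section \<open>Subsets with prescribed sum\<close>

definition subset_sum_gf :: "nat set \<Rightarrow> 'a::comm_semiring_1 fps" where
  "subset_sum_gf K = (\<Prod>k\<in>K. 1 + fps_X ^ k)"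

lemma card_subsets_with_sum_insert:
  assumes K: "finite K" and a: "a \<notin> K"
  shows "card {S. S \<subseteq> insert a K \<and> \<Sum>S = r}
       = card {S. S \<subseteq> K \<and> \<Sum>S = r} + card {S. S \<subseteq> K \<and> a + \<Sum>S = r}"
proof -
  have sum_insert: "\<Sum>(insert a S) = a + \<Sum>S" if "S \<subseteq> K" for S
    using that K a finite_subset by (subst sum.insert) auto
  have "{S. S \<subseteq> insert a K \<and> \<Sum>S = r}
      = {S. S \<subseteq> K \<and> \<Sum>S = r} \<union> insert a ` {S. S \<subseteq> K \<and> a + \<Sum>S = r}"
  proof (intro equalityI subsetI)
    fix S assume S: "S \<in> {S. S \<subseteq> insert a K \<and> \<Sum>S = r}"
    show "S \<in> {S. S \<subseteq> K \<and> \<Sum>S = r} \<union> insert a ` {S. S \<subseteq> K \<and> a + \<Sum>S = r}"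
    proof (cases "a \<in> S")
      case True
      then have S_eq: "S = insert a (S - {a})" and rest: "S - {a} \<subseteq> K" using S by auto
      then have "a + \<Sum>(S - {a}) = r" using S sum_insert[OF rest] by simp
      then show ?thesis using S_eq rest by blast
    next
      case False
      then show ?thesis using S by auto
    qed
  qed (use sum_insert in auto)
  moreover have "inj_on (insert a) {S. S \<subseteq> K \<and> a + \<Sum>S = r}"
    using a by (auto intro!: inj_onI)
  moreover have "finite {S. S \<subseteq> K \<and> P S}" for P using K by simp
  moreover have "{S. S \<subseteq> K \<and> \<Sum>S = r} \<inter> insert a ` {S. S \<subseteq> K \<and> a + \<Sum>S = r} = {}"
    using a by auto
  ultimately show ?thesis by (simp add: card_Un_disjoint card_image)
qed

lemma fps_nth_subset_sum_gf:
  assumes "finite K"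
  shows "fps_nth (subset_sum_gf K) r = of_nat (card {S. S \<subseteq> K \<and> \<Sum>S = r})"
  using assms
proof (induction K arbitrary: r rule: finite_induct)
  case empty
  have "{S. S \<subseteq> {} \<and> \<Sum>S = r} = (if r = 0 then {{}} else {})" by auto
  then show ?case by (simp add: subset_sum_gf_def)
next
  case (insert a K)
  have "{S. S \<subseteq> K \<and> a + \<Sum>S = r} = (if r < a then {} else {S. S \<subseteq> K \<and> \<Sum>S = r - a})"
    by auto
  moreover have "subset_sum_gf (insert a K) = subset_sum_gf K + fps_X ^ a * (subset_sum_gf K :: 'a fps)"
    using insert by (simp add: subset_sum_gf_def algebra_simps)
  ultimately show ?case
    using insert by (simp add: fps_X_power_mult_nth card_subsets_with_sum_insert)
qed

lemma subset_sum_gf_atLeastAtMost_Suc: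
  "a \<le> Suc b \<Longrightarrow> subset_sum_gf {a..Suc b} = (1 + fps_X ^ Suc b) * subset_sum_gf {a..b}"
  by (simp add: subset_sum_gf_def prod.cl_ivl_Suc mult.commute)

lemma subset_sum_gf_atLeast_Suc_atMost:
  "a \<le> b \<Longrightarrow> subset_sum_gf {a..b} = (1 + fps_X ^ a) * subset_sum_gf {Suc a..b}"
  by (simp add: subset_sum_gf_def prod.atLeast_Suc_atMost)

lemma fps_nth_neg1_power_mult:
  "fps_nth ((- 1) ^ h * f) n = (- 1) ^ h * fps_nth (f :: 'a::comm_ring_1 fps) n"
  by (induction h) (simp_all add: fps_mult_left_const_nth)

section \<open>Restricted partitions and their descent sets\<close>

definition partition_of :: "nat \<Rightarrow> nat set \<Rightarrow> nat list" where
  "partition_of h S = map (\<lambda>i. 3 + card {s\<in>S. i < s}) [0..<h]"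

definition descents :: "nat list \<Rightarrow> nat set" where
  "descents q = {s. 0 < s \<and> s < length q \<and> q ! (s - 1) \<noteq> q ! s}"

lemma card_greater_Suc:
  assumes "finite S"
  shows "card {s\<in>S. i < s} = card {s\<in>S. Suc i < s} + (if Suc i \<in> S then 1 else 0)"
proof -
  have "{s\<in>S. i < s} = {s\<in>S. Suc i < s} \<union> ({Suc i} \<inter> S)" by auto
  moreover have "card ({s\<in>S. Suc i < s} \<union> ({Suc i} \<inter> S)) = card {s\<in>S. Suc i < s} + card ({Suc i} \<inter> S)"
    by (rule card_Un_disjoint) (use assms in auto)
  ultimately show ?thesis by auto
qed

lemma sum_card_greater:
  assumes "finite S" "S \<subseteq> {..h}"
  shows "(\<Sum>i<h. card {s\<in>S. i < s}) = \<Sum>S"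
proof -
  have "card {i\<in>{..<h}. i < s} = s" if "s \<in> S" for s
  proof -
    have "{i\<in>{..<h}. i < s} = {..<s}" using that assms(2) by auto
    then show ?thesis by simp
  qed
  then show ?thesis using assms(1) by (simp add: sum_multicount_gen)
qed

lemma length_partition_of [simp]: "length (partition_of h S) = h"
  by (simp add: partition_of_def)

lemma nth_partition_of: "i < h \<Longrightarrow> partition_of h S ! i = 3 + card {s\<in>S. i < s}"
  by (simp add: partition_of_def)

lemma sum_list_partition_of:
  assumes "finite S" "S \<subseteq> {..h}"
  shows "sum_list (partition_of h S) = 3 * h + \<Sum>S"
proof -
  have "sum_list (partition_of h S) = (\<Sum>i<h. 3 + card {s\<in>S. i < s})"
    by (simp add: partition_of_def sum_set_upt_conv_sum_list_nat[symmetric] lessThan_atLeast0)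
  also have "\<dots> = 3 * h + \<Sum>S" using sum_card_greater[OF assms] by (simp add: sum.distrib)
  finally show ?thesis .
qed

lemma restr_part_partition_of:
  assumes h: "h \<ge> 3" and S: "S \<subseteq> {2..h-2}"
  shows "restr_part (3 * h + \<Sum>S) (partition_of h S)"
proof -
  have fin: "finite S" using S finite_subset by blast
  have "partition_of h S ! i \<ge> partition_of h S ! j" if "i < j" "j < h" for i j
  proof -
    have "card {s\<in>S. j < s} \<le> card {s\<in>S. i < s}" using that fin by (intro card_mono) auto
    then show ?thesis using that by (simp add: nth_partition_of)
  qed
  then have sorted: "sorted_wrt (\<ge>) (partition_of h S)"
    by (simp add: sorted_wrt_iff_nth_less)
  have steps: "partition_of h S ! j - partition_of h S ! (j + 1) \<in> {0, 1}" if "j + 1 < h" for j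
    using that card_greater_Suc[OF fin, of j] by (simp add: nth_partition_of)
  have "{s\<in>S. 0 < s} = {s\<in>S. 1 < s}" and "card {s\<in>S. h - 2 < s} = 0" and "card {s\<in>S. h - 1 < s} = 0"
    using S h by (auto simp: subset_iff card_eq_0_iff)
  then have "partition_of h S ! 0 = partition_of h S ! 1"
    and "partition_of h S ! (h - 2) = 3" and "partition_of h S ! (h - 1) = 3"
    using h by (simp_all add: nth_partition_of)
  moreover have "sum_list (partition_of h S) = 3 * h + \<Sum>S"
    using S by (intro sum_list_partition_of fin) (auto simp: subset_iff)
  moreover have "\<forall>x\<in>set (partition_of h S). 0 < x" by (auto simp: partition_of_def)
  ultimately show ?thesis unfolding restr_part_def using sorted steps h by auto
qed

lemma descents_partition_of:
  assumes h: "h \<ge> 3" and S: "S \<subseteq> {2..h-2}"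
  shows "descents (partition_of h S) = S"
proof -
  have fin: "finite S" using S finite_subset by blast
  have "s \<in> descents (partition_of h S) \<longleftrightarrow> s \<in> S" for s
  proof (cases "0 < s \<and> s < h")
    case True
    then obtain j where "s = Suc j" by (cases s) auto
    then show ?thesis using True card_greater_Suc[OF fin, of j] by (simp add: descents_def nth_partition_of)
  next
    case False
    then show ?thesis using S h by (auto simp: descents_def)
  qed
  then show ?thesis by blast
qed

lemma descents_subset:
  assumes "restr_part n q"
  shows "descents q \<subseteq> {2..length q - 2}"
proof
  fix s assume "s \<in> descents q"
  then have s: "0 < s" "s < length q" and jump: "q ! (s - 1) \<noteq> q ! s" by (auto simp: descents_def)
  have "q ! 0 = q ! 1" "q ! (length q - 2) = q ! (length q - 1)"
    using assms by (auto simp: restr_part_def)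
  moreover have "length q - 1 - 1 = length q - 2" by simp
  ultimately have "s \<noteq> 1" "s \<noteq> length q - 1" using jump by auto
  then show "s \<in> {2..length q - 2}" using s by auto
qed

lemma nth_eq_card_descents:
  assumes q: "restr_part n q" and i: "i < length q"
  shows "q ! i = 3 + card {s\<in>descents q. i < s}"
proof -
  let ?h = "length q"
  have fin: "finite (descents q)" by (simp add: descents_def)
  have last: "q ! (?h - 1) = 3" using q by (auto simp: restr_part_def)
  have descent_step: "q ! j = q ! Suc j + (if Suc j \<in> descents q then 1 else 0)" if "Suc j < ?h" for j
  proof -
    have "q ! j \<ge> q ! Suc j" "q ! j - q ! Suc j \<in> {0, 1}"
      using q that by (auto simp: restr_part_def sorted_wrt_iff_nth_less)
    then show ?thesis using that by (auto simp: descents_def)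
  qed
  from i have "i \<le> ?h - 1" by simp
  then show ?thesis
  proof (induction rule: inc_induct)
    case base
    have "{s\<in>descents q. ?h - 1 < s} = {}" by (auto simp: descents_def)
    then show ?case using last by (simp only: card.empty)
  next
    case (step j)
    then show ?case using descent_step[of j] card_greater_Suc[OF fin, of j] by simp
  qed
qed

lemma partition_of_descents:
  assumes "restr_part n q"
  shows "partition_of (length q) (descents q) = q"
  by (rule nth_equalityI) (simp_all add: nth_partition_of nth_eq_card_descents[OF assms])

lemma bij_betw_partition_of:
  assumes h: "h \<ge> 3"
  shows "bij_betw (partition_of h) {S. S \<subseteq> {2..h-2} \<and> 3 * h + \<Sum>S = n}
                                   {q. restr_part n q \<and> length q = h}"
proof (rule bij_betw_byWitness[where f' = descents])
  show "\<forall>S\<in>{S. S \<subseteq> {2..h-2} \<and> 3 * h + \<Sum>S = n}. descents (partition_of h S) = S"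
    using descents_partition_of h by auto
  show "\<forall>q\<in>{q. restr_part n q \<and> length q = h}. partition_of h (descents q) = q"
    using partition_of_descents by auto
  show "partition_of h ` {S. S \<subseteq> {2..h-2} \<and> 3 * h + \<Sum>S = n} \<subseteq> {q. restr_part n q \<and> length q = h}"
    using restr_part_partition_of h by auto
  show "descents ` {q. restr_part n q \<and> length q = h} \<subseteq> {S. S \<subseteq> {2..h-2} \<and> 3 * h + \<Sum>S = n}"
  proof clarify
    fix q assume q: "restr_part n q" and "h = length q"
    have "restr_part (3 * h + \<Sum>(descents q)) (partition_of h (descents q))"
      using restr_part_partition_of[OF h] descents_subset[OF q] \<open>h = length q\<close> by simp
    then have "restr_part (3 * h + \<Sum>(descents q)) q"
      using partition_of_descents[OF q] \<open>h = length q\<close> by simp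
    then show "descents q \<subseteq> {2..length q - 2} \<and> 3 * length q + \<Sum>(descents q) = n"
      using q descents_subset \<open>h = length q\<close> by (auto simp: restr_part_def)
  qed
qed

lemma card_restr_part_length:
  assumes "h \<ge> 3"
  shows "of_nat (card {q. restr_part n q \<and> length q = h})
       = fps_nth (fps_X ^ (3 * h) * subset_sum_gf {2..h-2} :: 'a::comm_semiring_1 fps) n"
proof -
  have "card {q. restr_part n q \<and> length q = h} = card {S. S \<subseteq> {2..h-2} \<and> 3 * h + \<Sum>S = n}"
    using bij_betw_same_card[OF bij_betw_partition_of[OF assms]] by simp
  moreover have "{S. S \<subseteq> {2..h-2} \<and> 3 * h + \<Sum>S = n}
               = (if n < 3 * h then {} else {S. S \<subseteq> {2..h-2} \<and> \<Sum>S = n - 3 * h})"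
    by auto
  ultimately show ?thesis by (simp add: fps_X_power_mult_nth fps_nth_subset_sum_gf)
qed

lemma finite_restr_part_length: "h \<ge> 3 \<Longrightarrow> finite {q. restr_part n q \<and> length q = h}"
  using bij_betw_finite[OF bij_betw_partition_of] by fastforce

lemma length_le_sum_list: "\<forall>x\<in>set xs. 0 < x \<Longrightarrow> length xs \<le> sum_list (xs :: nat list)"
  by (induction xs) auto

lemma card_restr_part_sum_lengths:
  assumes "n < K"
  shows "card {q. restr_part n q \<and> P (length q)}
       = (\<Sum>h\<in>{h\<in>{3..<K}. P h}. card {q. restr_part n q \<and> length q = h})"
proof -
  have "{q. restr_part n q \<and> P (length q)} = (\<Union>h\<in>{h\<in>{3..<K}. P h}. {q. restr_part n q \<and> length q = h})"
  proof safe
    fix q assume q: "restr_part n q" "P (length q)"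
    then have "length q \<le> n" using length_le_sum_list[of q] by (auto simp: restr_part_def)
    then show "q \<in> (\<Union>h\<in>{h\<in>{3..<K}. P h}. {q. restr_part n q \<and> length q = h})"
      using q assms by (auto simp: restr_part_def)
  qed
  then show ?thesis by (simp only:) (rule card_UN_disjoint; auto intro: finite_restr_part_length)
qed

definition signed_restr_gf :: "nat \<Rightarrow> int fps" where
  "signed_restr_gf K = (\<Sum>h\<in>{3..<K}. (- 1) ^ h * (fps_X ^ (3 * h) * subset_sum_gf {2..h-2}))"

lemma e2_minus_o2_eq_fps_nth:
  assumes "n < K"
  shows "int (e2 n) - int (o2 n) = fps_nth (signed_restr_gf K) n"
proof -
  let ?c = "\<lambda>h. int (card {q. restr_part n q \<and> length q = h})"
  have "fps_nth (signed_restr_gf K) n = (\<Sum>h\<in>{3..<K}. (- 1) ^ h * ?c h)"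
    unfolding signed_restr_gf_def fps_sum_nth
    by (intro sum.cong refl) (simp add: fps_nth_neg1_power_mult card_restr_part_length)
  also have "\<dots> = (\<Sum>h\<in>{3..<K}. if even h then ?c h else - ?c h)"
    by (intro sum.cong refl) simp
  also have "\<dots> = (\<Sum>h\<in>{h\<in>{3..<K}. even h}. ?c h) - (\<Sum>h\<in>{h\<in>{3..<K}. odd h}. ?c h)"
    by (simp add: sum.If_cases sum_negf Int_def Collect_conj_eq[symmetric])
  also have "\<dots> = int (e2 n) - int (o2 n)"
    unfolding e2_def o2_def card_restr_part_sum_lengths[OF assms, of even] card_restr_part_sum_lengths[OF assms, of odd]
    by simp
  finally show ?thesis by simp
qed

section \<open>Telescoping the signed generating function\<close>

text \<open>
  In the notation above, lead_exp i = a_i and tail_sum i N is the N-th partial sum of T_i; for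
  partial sums the identity for T_i holds up to tail_error i M, which is of order
  x^(a_i + (i+2)(M+2)).
\<close>

fun lead_exp :: "nat \<Rightarrow> nat" where
  "lead_exp 0 = 5"
| "lead_exp (Suc i) = lead_exp i + 3 * i + 7"

definition tail_term :: "nat \<Rightarrow> nat \<Rightarrow> int fps" where
  "tail_term i j = (- 1) ^ j * fps_X ^ (lead_exp i + (i + 2) * j) * (1 + fps_X ^ 2)
                   * subset_sum_gf {i + 2..i + 1 + j}"

definition tail_sum :: "nat \<Rightarrow> nat \<Rightarrow> int fps" where
  "tail_sum i N = (\<Sum>j<N. tail_term i j)"

definition tail_head :: "nat \<Rightarrow> int fps" where
  "tail_head i = (1 + fps_X ^ 2) * (fps_X ^ lead_exp i - fps_X ^ (lead_exp i + i + 2))"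

definition tail_error :: "nat \<Rightarrow> nat \<Rightarrow> int fps" where
  "tail_error i M = (- 1) ^ (M + 1) * fps_X ^ (lead_exp i + (i + 2) * (M + 2)) * (1 + fps_X ^ 2)
                    * subset_sum_gf {i + 3..i + M + 2}"

lemma tail_term_Suc_Suc:
  "tail_term i (M + 2) = tail_term (Suc i) M + tail_error i (Suc M) - tail_error i M"
proof -
  define Y :: "int fps" where "Y = fps_X ^ (lead_exp i + (i + 2) * (M + 2))"
  define u :: "int fps" where "u = fps_X ^ (i + 2)"
  define v :: "int fps" where "v = fps_X ^ Suc (i + M + 2)"
  define R :: "int fps" where "R = subset_sum_gf {i + 3..i + M + 2}"
  have "subset_sum_gf {i + 3..Suc (i + M + 2)} = (1 + v) * R"
    unfolding v_def R_def by (rule subset_sum_gf_atLeastAtMost_Suc) simp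
  then have R1: "subset_sum_gf {i + 3..i + Suc M + 2} = (1 + v) * R" by simp
  have "subset_sum_gf {i + 2..i + 1 + (M + 2)} = (1 + u) * subset_sum_gf {Suc (i + 2)..i + 1 + (M + 2)}"
    unfolding u_def by (rule subset_sum_gf_atLeast_Suc_atMost) simp
  also have "{Suc (i + 2)..i + 1 + (M + 2)} = {i + 3..Suc (i + M + 2)}" by auto
  finally have R2: "subset_sum_gf {i + 2..i + 1 + (M + 2)} = (1 + u) * ((1 + v) * R)"
    using R1 by simp
  have R0: "subset_sum_gf {Suc i + 2..Suc i + 1 + M} = R"
    unfolding R_def by (rule arg_cong[where f = subset_sum_gf]) auto
  have "lead_exp (Suc i) + (Suc i + 2) * M = (lead_exp i + (i + 2) * (M + 2)) + Suc (i + M + 2)"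
    by (simp add: algebra_simps)
  then have Yv: "fps_X ^ (lead_exp (Suc i) + (Suc i + 2) * M) = Y * v"
    unfolding Y_def v_def by (simp only: power_add)
  have "lead_exp i + (i + 2) * (Suc M + 2) = (lead_exp i + (i + 2) * (M + 2)) + (i + 2)"
    by (simp add: algebra_simps)
  then have Yu: "fps_X ^ (lead_exp i + (i + 2) * (Suc M + 2)) = Y * u"
    unfolding Y_def u_def by (simp only: power_add)
  have T2: "tail_term i (M + 2) = (- 1) ^ M * Y * (1 + fps_X ^ 2) * ((1 + u) * ((1 + v) * R))"
    unfolding tail_term_def R2 Y_def by simp
  have T0: "tail_term (Suc i) M = (- 1) ^ M * (Y * v) * (1 + fps_X ^ 2) * R"
    unfolding tail_term_def R0 Yv ..
  have E1: "tail_error i (Suc M) = (- 1) ^ M * (Y * u) * (1 + fps_X ^ 2) * ((1 + v) * R)"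
    unfolding tail_error_def R1 Yu by simp
  have E0: "tail_error i M = - ((- 1) ^ M * Y * (1 + fps_X ^ 2) * R)"
    unfolding tail_error_def Y_def R_def by simp
  show ?thesis unfolding T2 T0 E1 E0 by (simp add: algebra_simps)
qed

lemma tail_sum_two: "tail_sum i 2 = tail_head i + tail_error i 0"
proof -
  define a :: "int fps" where "a = fps_X ^ lead_exp i"
  define u :: "int fps" where "u = fps_X ^ (i + 2)"
  have "lead_exp i + (i + 2) * 1 = lead_exp i + (i + 2)" by simp
  then have Xu: "fps_X ^ (lead_exp i + (i + 2) * 1) = a * u"
    unfolding a_def u_def by (simp only: power_add)
  have "lead_exp i + i + 2 = lead_exp i + (i + 2)" by simp
  then have Xu': "fps_X ^ (lead_exp i + i + 2) = a * u"
    unfolding a_def u_def by (simp only: power_add)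
  have "lead_exp i + (i + 2) * (0 + 2) = lead_exp i + (i + 2) + (i + 2)" by simp
  then have Xuu: "fps_X ^ (lead_exp i + (i + 2) * (0 + 2)) = a * u * u"
    unfolding a_def u_def by (simp only: power_add)
  have S: "tail_sum i 2 = tail_term i 0 + tail_term i 1"
    by (simp add: tail_sum_def numeral_2_eq_2)
  have T0: "tail_term i 0 = a * (1 + fps_X ^ 2)"
    by (simp add: tail_term_def subset_sum_gf_def a_def)
  have T1: "tail_term i 1 = - (a * u * (1 + fps_X ^ 2) * (1 + u))"
    unfolding tail_term_def Xu by (simp add: subset_sum_gf_def u_def)
  have E0: "tail_error i 0 = - (a * u * u * (1 + fps_X ^ 2))"
    unfolding tail_error_def Xuu by (simp add: subset_sum_gf_def)
  have H: "tail_head i = (1 + fps_X ^ 2) * (a - a * u)"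
    unfolding tail_head_def Xu' a_def ..
  show ?thesis unfolding S T0 T1 E0 H by (simp add: algebra_simps)
qed

lemma tail_sum_telescope:
  "tail_sum i (M + 2) = tail_head i + tail_sum (Suc i) M + tail_error i M"
proof (induction M)
  case 0
  have "tail_sum (Suc i) 0 = 0" by (simp add: tail_sum_def)
  with tail_sum_two show ?case by (simp add: numeral_2_eq_2)
next
  case (Suc M)
  have "tail_sum i (Suc M + 2) = tail_sum i (M + 2) + tail_term i (M + 2)"
    by (simp add: tail_sum_def)
  also have "\<dots> = tail_head i + tail_sum (Suc i) (Suc M) + tail_error i (Suc M)"
    unfolding Suc.IH tail_term_Suc_Suc by (simp add: tail_sum_def)
  finally show ?case .
qed

lemma lead_exp_ge: "lead_exp i \<ge> 7 * i + 5"
  by (induction i) auto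

lemma fps_nth_tail_error:
  assumes "n < lead_exp i + (i + 2) * (M + 2)"
  shows "fps_nth (tail_error i M) n = 0"
proof -
  have "tail_error i M = (- 1) ^ (M + 1) * (fps_X ^ (lead_exp i + (i + 2) * (M + 2))
                          * ((1 + fps_X ^ 2) * subset_sum_gf {i + 3..i + M + 2}))"
    by (simp only: tail_error_def mult.assoc)
  then show ?thesis
    using assms by (simp only: fps_nth_neg1_power_mult fps_X_power_mult_nth if_True mult_zero_right)
qed

lemma fps_nth_tail_sum:
  "n < 2 * L + 7 * i + 5 \<Longrightarrow> fps_nth (tail_sum i (2 * L)) n = (\<Sum>k<L. fps_nth (tail_head (i + k)) n)"
proof (induction L arbitrary: i)
  case 0
  then show ?case by (simp add: tail_sum_def)
next
  case (Suc L)
  have "n < 7 * i + 5 + 2 * (2 * L + 2)" using Suc.prems by simp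
  also have "\<dots> \<le> lead_exp i + (i + 2) * (2 * L + 2)"
    by (intro add_mono lead_exp_ge mult_right_mono) simp_all
  finally have "n < lead_exp i + (i + 2) * (2 * L + 2)" .
  then have "fps_nth (tail_error i (2 * L)) n = 0" by (rule fps_nth_tail_error)
  moreover have "tail_sum i (2 * Suc L) = tail_head i + tail_sum (Suc i) (2 * L) + tail_error i (2 * L)"
    using tail_sum_telescope[of i "2 * L"] by (simp add: add.commute)
  ultimately show ?case
    using Suc.IH[of "Suc i"] Suc.prems unfolding sum.lessThan_Suc_shift by simp
qed

lemma signed_restr_gf_eq_tail_sum: "signed_restr_gf (N + 4) = tail_sum 1 N - fps_X ^ 9"
proof (induction N)
  case 0
  then show ?case by (simp add: signed_restr_gf_def tail_sum_def subset_sum_gf_def numeral_eq_Suc)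
next
  case (Suc N)
  have "signed_restr_gf (Suc N + 4)
      = signed_restr_gf (N + 4) + (- 1) ^ (N + 4) * (fps_X ^ (3 * (N + 4)) * subset_sum_gf {2..N + 4 - 2})"
    unfolding signed_restr_gf_def add_Suc by (subst sum.atLeastLessThan_Suc) simp_all
  also have "subset_sum_gf {2..N + 4 - 2} = (1 + fps_X ^ 2) * (subset_sum_gf {1 + 2..1 + 1 + N} :: int fps)"
    using subset_sum_gf_atLeast_Suc_atMost[of 2 "N + 2"] by (simp add: numeral_eq_Suc)
  also have "3 * (N + 4) = lead_exp 1 + (1 + 2) * N" by (simp add: numeral_eq_Suc)
  also have "(- 1 :: int fps) ^ (N + 4) = (- 1) ^ N" by (simp add: power_add)
  finally have "signed_restr_gf (Suc N + 4) = signed_restr_gf (N + 4) + tail_term 1 N"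
    by (simp add: tail_term_def mult.assoc)
  then show ?case by (simp add: Suc.IH tail_sum_def)
qed

lemma fps_nth_tail_head:
  "fps_nth (tail_head i) n = of_bool (n = lead_exp i) + of_bool (n = lead_exp i + 2)
                             - of_bool (n = lead_exp i + i + 2) - of_bool (n = lead_exp i + i + 4)"
proof -
  have expand: "tail_head i = fps_X ^ lead_exp i + fps_X ^ (lead_exp i + 2)
                              - fps_X ^ (lead_exp i + i + 2) - fps_X ^ (lead_exp i + i + 4)"
  proof -
    have "lead_exp i + i + 4 = lead_exp i + i + 2 + 2" by simp
    then show ?thesis unfolding tail_head_def power_add[of fps_X _ 2]
      by (simp only: ring_distribs mult_1 mult.commute diff_diff_eq power_add[of fps_X _ 2])
  qed
  show ?thesis unfolding expand fps_sub_nth fps_add_nth fps_X_power_nth of_bool_def ..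
qed

lemma e2_minus_o2_eq_sum_tail_head:
  "int (e2 n) - int (o2 n) = (\<Sum>k<n. fps_nth (tail_head (Suc k)) n) - of_bool (n = 9)"
proof -
  have "int (e2 n) - int (o2 n) = fps_nth (signed_restr_gf (2 * n + 4)) n"
    by (rule e2_minus_o2_eq_fps_nth) simp
  also have "\<dots> = fps_nth (tail_sum 1 (2 * n)) n - of_bool (n = 9)"
    by (simp add: signed_restr_gf_eq_tail_sum fps_X_power_nth)
  also have "fps_nth (tail_sum 1 (2 * n)) n = (\<Sum>k<n. fps_nth (tail_head (Suc k)) n)"
    by (simp add: fps_nth_tail_sum)
  finally show ?thesis .
qed

lemma lead_exp_gap:
  assumes "i < j"
  shows "lead_exp i + i + 4 < lead_exp j"
proof -
  have "\<And>k. lead_exp k \<le> lead_exp (Suc k)" by simp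
  then have "lead_exp (Suc i) \<le> lead_exp j"
    by (rule lift_Suc_mono_le) (use assms in simp)
  then show ?thesis by simp
qed

lemma e2_minus_o2_eq_fps_nth_tail_head:
  assumes j: "j \<ge> 1" and n: "lead_exp j \<le> n" "n \<le> lead_exp j + j + 4"
  shows "int (e2 n) - int (o2 n) = fps_nth (tail_head j) n"
proof -
  have "n \<ge> 12" using n(1) lead_exp_ge[of j] j by simp
  have "fps_nth (tail_head (Suc k)) n = 0" if "Suc k \<noteq> j" for k
  proof (cases "Suc k < j")
    case True
    then show ?thesis using lead_exp_gap[of "Suc k" j] n by (simp add: fps_nth_tail_head)
  next
    case False
    then show ?thesis using lead_exp_gap[of j "Suc k"] n that by (simp add: fps_nth_tail_head)
  qed
  then have "(\<Sum>k<n. fps_nth (tail_head (Suc k)) n)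
           = (\<Sum>k<n. if k = j - 1 then fps_nth (tail_head j) n else 0)"
    using j by (intro sum.cong) auto
  also have "\<dots> = fps_nth (tail_head j) n"
    using \<open>n \<ge> 12\<close> n(1) lead_exp_ge[of j] by simp
  finally show ?thesis using \<open>n \<ge> 12\<close> by (simp add: e2_minus_o2_eq_sum_tail_head)
qed

lemma e2_minus_o2_nine: "int (e2 9) - int (o2 9) = - 1"
proof -
  have "fps_nth (tail_head (Suc k)) 9 = 0" for k
    using lead_exp_ge[of "Suc k"] by (simp add: fps_nth_tail_head)
  then show ?thesis by (simp add: e2_minus_o2_eq_sum_tail_head)
qed

lemma e2_eq_o2_off_tail_head_exponents:
  assumes "n \<noteq> 9"
    and "\<And>j. j \<ge> 1 \<Longrightarrow> n \<notin> {lead_exp j, lead_exp j + 2, lead_exp j + j + 2, lead_exp j + j + 4}"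
  shows "int (e2 n) = int (o2 n)"
proof -
  have "fps_nth (tail_head (Suc k)) n = 0" for k
    using assms(2)[of "Suc k"] by (simp add: fps_nth_tail_head)
  then show ?thesis using assms(1) e2_minus_o2_eq_sum_tail_head[of n] by simp
qed

lemma lead_exp_closed_form: "2 * lead_exp j = 3 * j ^ 2 + 11 * j + 10"
  by (induction j) (simp_all add: power2_eq_square algebra_simps)

lemma P_eq_lead_exp:
  "P2 (int j + 1) = int (lead_exp j)"
  "P3 (int j + 1) = int (lead_exp j + 2)"
  "P4 (int j + 1) = int (lead_exp j + j + 2)"
  "P1 (int j + 2) = int (lead_exp j + j + 4)"
proof -
  have A: "2 * int (lead_exp j) = 3 * (int j)^2 + 11 * int j + 10"
    using arg_cong[OF lead_exp_closed_form, of int] by simp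
  show "P2 (int j + 1) = int (lead_exp j)" "P3 (int j + 1) = int (lead_exp j + 2)"
       "P4 (int j + 1) = int (lead_exp j + j + 2)" "P1 (int j + 2) = int (lead_exp j + j + 4)"
    unfolding P1_def P2_def P3_def P4_def using A by (simp_all add: power2_eq_square algebra_simps)
qed

lemma e2_eq_o2_off_P:
  assumes "\<forall>t::int. t \<ge> 2 \<longrightarrow> int n \<notin> {P1 t, P2 t, P3 t, P4 t}"
  shows "int (e2 n) = int (o2 n)"
proof (rule e2_eq_o2_off_tail_head_exponents)
  show "n \<noteq> 9" using assms P_eq_lead_exp(4)[of 0] by auto
  show "n \<notin> {lead_exp j, lead_exp j + 2, lead_exp j + j + 2, lead_exp j + j + 4}" if "j \<ge> 1" for j
  proof -
    have "int n \<notin> {P2 (int j + 1), P3 (int j + 1), P4 (int j + 1)}" "int n \<noteq> P1 (int j + 2)"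
      using assms that by simp_all
    then show ?thesis unfolding P_eq_lead_exp by auto
  qed
qed

lemma e2_eq_o2_minus_one_at_P1_P4:
  assumes t: "t \<ge> 2" and n: "int n = P1 t \<or> int n = P4 t"
  shows "int (e2 n) = int (o2 n) - 1"
proof -
  define j where "j = nat (t - 1)"
  then have j: "t = int j + 1" "j \<ge> 1" using t by auto
  have "int (e2 n) - int (o2 n) = - 1"
  proof (cases "int n = P4 t")
    case True
    then have "n = lead_exp j + j + 2" using j P_eq_lead_exp(3)[of j] by simp
    then show ?thesis using j e2_minus_o2_eq_fps_nth_tail_head[of j n] by (simp add: fps_nth_tail_head)
  next
    case False
    have "int (j - 1) + 2 = t" using j by simp
    then have n': "n = lead_exp (j - 1) + (j - 1) + 4" using n False P_eq_lead_exp(4)[of "j - 1"] by simp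
    show ?thesis
    proof (cases "j = 1")
      case True
      then show ?thesis using n' e2_minus_o2_nine by simp
    next
      case False
      then show ?thesis using j n' e2_minus_o2_eq_fps_nth_tail_head[of "j - 1" n] by (simp add: fps_nth_tail_head)
    qed
  qed
  then show ?thesis by simp
qed

lemma e2_eq_o2_plus_one_at_P2_P3:
  assumes t: "t \<ge> 2" and n: "int n = P2 t \<or> int n = P3 t"
  shows "int (e2 n) = int (o2 n) + 1"
proof -
  define j where "j = nat (t - 1)"
  then have j: "t = int j + 1" "j \<ge> 1" using t by auto
  then have "n = lead_exp j \<or> n = lead_exp j + 2" using n P_eq_lead_exp(1,2)[of j] by auto
  then have "int (e2 n) - int (o2 n) = 1"
    using j e2_minus_o2_eq_fps_nth_tail_head[of j n] by (auto simp: fps_nth_tail_head)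
  then show ?thesis by simp
qed

theorem corollary4p10:
  fixes n :: nat
  assumes "n \<ge> 6"
  shows "((\<forall>t::int. t \<ge> 2 \<longrightarrow> int n \<notin> {P1 t, P2 t, P3 t, P4 t})
            \<longrightarrow> int (e2 n) = int (o2 n))
       \<and> ((\<exists>t::int. t \<ge> 2 \<and> (int n = P1 t \<or> int n = P4 t))
            \<longrightarrow> int (e2 n) = int (o2 n) - 1)
       \<and> ((\<exists>t::int. t \<ge> 2 \<and> (int n = P2 t \<or> int n = P3 t))
            \<longrightarrow> int (e2 n) = int (o2 n) + 1)"
  using e2_eq_o2_off_P e2_eq_o2_minus_one_at_P1_P4 e2_eq_o2_plus_one_at_P2_P3 by blast

end
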